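(* Assume (A.3). Then there are finite constants $C_M,C_b,C_f>0$, independent of $h$, such that for all sufficiently small $h$: \[ |M(y^\star(0),y^\star(T))-M(\hat y_h(0),\hat y_h(T))|\le C_Mh^{\lambda\eta},\qquad \|b(\hat y_h(0),\hat y_h(T))\|_2^2\le C_bh^{2\lambda\eta}, \] and, for almost every $t\in[0,T]$, \[ \big\|\big(f_1(y^\star(t),u^\star(t),t)-f_1(\hat y_h(t),\hat u_h(t),t),\ f_2(y^\star(t),u^\star(t),t)-f_2(\hat y_h(t),\hat u_h(t),t)\big)\big\|_2^2\le C_fh^{2\lambda\eta}. \]
   Context: Let $T>0$. $\mathcal{X}$: pairs $(y,u)$, $y:[0,T]\to\mathbb{R}^{n_y}$ with $y\in L^\infty$, $\dot y\in L^2$, $u\in L^\infty([0,T];\mathbb{R}^{n_u})$; $\|(y,u)\|_{\mathcal{X}}=\|\dot y\|_{L^2}+\operatorname{ess\,sup}_t\|(y(t),u(t))\|_\infty$. Given $M,b$ on $\mathbb{R}^{n_y}\times\mathbb{R}^{n_y}$ (values in $\mathbb{R}$, $\mathbb{R}^{n_b}$), $f_1,f_2$ on $\mathbb{R}^{n_y}\times\mathbb{R}^{n_u}\times[0,T]$ (values in $\mathbb{R}^{n_y}$, $\mathbb{R}^{n_c}$), and bounds $y_L\le y_R$, $u_L\le u_R$, the optimal control problem minimizes $M(y(0),y(T))$ over $\mathcal{X}$ subject to $b(y(0),y(T))=0$, $\dot y=f_1(y,u,t)$, $f_2(y,u,t)=0$ a.e., and the bounds for all $t$; $(y^\star,u^\star)$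 is a local (hence feasible) minimizer. Mesh $0=t_1<\dots<t_{N+1}=T$, $h=\max_i(t_{i+1}-t_i)$, degree $p$; $\mathcal{X}_{h,p}$: $y_h$ continuous and polynomial of degree $\le p$ on each $[t_i,t_{i+1}]$, $u_h$ polynomial of degree $\le p-1$ on each $[t_i,t_{i+1}]$. $\mathcal{B}_{h,p}\subset\mathcal{X}_{h,p}$ is the set of pairs satisfying the bounds at the sampling points of the discretization. (Approximability) there are $h_0,\eta,C_\eta>0$ such that for each $h\le h_0$ there exists $(y_h,u_h)\in\mathcal{B}_{h,p}$ with $\|(y^\star,u^\star)-(y_h,u_h)\|_{\mathcal{X}}\le C_\eta h^\eta$; $(\hat y_h,\hat u_h)$ denotes a fixed such pair. (A.3): there are $\lambda\in(0,1]$, $C_\lambda>0$, $\epsilon>0$ with $|M(y^\star(0),y^\star(T))-M(a,a')|\le C_\lambda\|(y^\star(0)-a,y^\star(T)-a')\|_2^\lambda$ and $\|b(y^\star(0),y^\star(T))-b(a,a')\|_2\le C_\lambda\|(y^\star(0)-a,y^\star(T)-a')\|_2^\lambda$ whenever $\|(y^\star(0)-a,y^\star(T)-a')\|_2\le\epsilon$, and for each $t\in[0,T]$, $\|(f_1(y^\star(t),u^\star(t),t)-f_1(v,w,t),f_2(y^\star(t),u^\star(t),t)-f_2(v,w,t))\|_2\le C_\lambda\|(y^\star(t)-v,u^\star(t)-w)\|_2^\lambda$ whenever $\|(y^\star(t)-v,u^\star(t)-w)\|_2\le\epsilon$. *)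

theory Defs
  imports "HOL-Analysis.Analysis" "HOL-Probability.Essential_Supremum"
begin

text \<open>A weak derivative in L2 of y on [0,T]: y is the (continuous) primitive of g,
  and g is square integrable.\<close>
definition L2_deriv :: "real \<Rightarrow> (real \<Rightarrow> real^'n) \<Rightarrow> (real \<Rightarrow> real^'n) \<Rightarrow> bool" where
  "L2_deriv T y g \<longleftrightarrow> g integrable_on {0..T} \<and> (\<lambda>t. norm (g t) ^ 2) integrable_on {0..T}
     \<and> (\<forall>t\<in>{0..T}. y t = y 0 + integral {0..t} g)"

definition ess_sup_inf :: "real \<Rightarrow> (real \<Rightarrow> real^'ny) \<Rightarrow> (real \<Rightarrow> real^'nu) \<Rightarrow> ereal" where
  "ess_sup_inf T y u = esssup (lebesgue_on {0..T}) (\<lambda>t. ereal (infnorm (y t, u t)))"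

definition in_X :: "real \<Rightarrow> (real \<Rightarrow> real^'ny) \<Rightarrow> (real \<Rightarrow> real^'nu) \<Rightarrow> bool" where
  "in_X T y u \<longleftrightarrow> (\<exists>g. L2_deriv T y g) \<and> u \<in> borel_measurable (lebesgue_on {0..T})
     \<and> ess_sup_inf T y u < \<infinity>"

definition X_norm :: "real \<Rightarrow> (real \<Rightarrow> real^'ny) \<Rightarrow> (real \<Rightarrow> real^'nu) \<Rightarrow> ereal" where
  "X_norm T y u = ereal (sqrt (integral {0..T} (\<lambda>t. norm ((SOME g. L2_deriv T y g) t) ^ 2)))
     + ess_sup_inf T y u"

definition feasible ::
  "real \<Rightarrow> (real^'ny \<Rightarrow> real^'ny \<Rightarrow> real^'nb)
   \<Rightarrow> (real^'ny \<Rightarrow> real^'nu \<Rightarrow> real \<Rightarrow> real^'ny) \<Rightarrow> (real^'ny \<Rightarrow> real^'nu \<Rightarrow> real \<Rightarrow> real^'nc)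
   \<Rightarrow> real^'ny \<Rightarrow> real^'ny \<Rightarrow> real^'nu \<Rightarrow> real^'nu
   \<Rightarrow> (real \<Rightarrow> real^'ny) \<Rightarrow> (real \<Rightarrow> real^'nu) \<Rightarrow> bool" where
  "feasible T b f1 f2 yL yR uL uR y u \<longleftrightarrow>
     in_X T y u \<and> b (y 0) (y T) = 0
     \<and> (\<exists>g. L2_deriv T y g \<and> (AE t in lebesgue_on {0..T}. g t = f1 (y t) (u t) t))
     \<and> (AE t in lebesgue_on {0..T}. f2 (y t) (u t) t = 0)
     \<and> (\<forall>t\<in>{0..T}. yL \<le> y t \<and> y t \<le> yR \<and> uL \<le> u t \<and> u t \<le> uR)"

definition local_minimizer ::
  "real \<Rightarrow> (real^'ny \<Rightarrow> real^'ny \<Rightarrow> real) \<Rightarrow> (real^'ny \<Rightarrow> real^'ny \<Rightarrow> real^'nb)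
   \<Rightarrow> (real^'ny \<Rightarrow> real^'nu \<Rightarrow> real \<Rightarrow> real^'ny) \<Rightarrow> (real^'ny \<Rightarrow> real^'nu \<Rightarrow> real \<Rightarrow> real^'nc)
   \<Rightarrow> real^'ny \<Rightarrow> real^'ny \<Rightarrow> real^'nu \<Rightarrow> real^'nu
   \<Rightarrow> (real \<Rightarrow> real^'ny) \<Rightarrow> (real \<Rightarrow> real^'nu) \<Rightarrow> bool" where
  "local_minimizer T M b f1 f2 yL yR uL uR ys us \<longleftrightarrow>
     feasible T b f1 f2 yL yR uL uR ys us \<and>
     (\<exists>\<delta>>0. \<forall>y u. feasible T b f1 f2 yL yR uL uR y u
        \<and> X_norm T (\<lambda>t. ys t - y t) (\<lambda>t. us t - u t) \<le> ereal \<delta>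
        \<longrightarrow> M (ys 0) (ys T) \<le> M (y 0) (y T))"

definition is_mesh :: "real \<Rightarrow> real \<Rightarrow> nat \<Rightarrow> (nat \<Rightarrow> real) \<Rightarrow> bool" where
  "is_mesh T h N tm \<longleftrightarrow> N \<ge> 1 \<and> tm 0 = 0 \<and> tm N = T \<and> (\<forall>i<N. tm i < tm (Suc i))
     \<and> h = Max ((\<lambda>i. tm (Suc i) - tm i) ` {..<N})"

definition poly_on :: "nat \<Rightarrow> real set \<Rightarrow> (real \<Rightarrow> real^'n) \<Rightarrow> bool" where
  "poly_on d S v \<longleftrightarrow> (\<exists>c :: nat \<Rightarrow> real^'n. \<forall>t\<in>S. v t = (\<Sum>k\<le>d. (t ^ k) *\<^sub>R c k))"

definition in_Xhp :: "real \<Rightarrow> nat \<Rightarrow> nat \<Rightarrow> (nat \<Rightarrow> real)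
     \<Rightarrow> (real \<Rightarrow> real^'ny) \<Rightarrow> (real \<Rightarrow> real^'nu) \<Rightarrow> bool" where
  "in_Xhp T p N tm y u \<longleftrightarrow> continuous_on {0..T} y
     \<and> (\<forall>i<N. poly_on p {tm i..tm (Suc i)} y \<and> poly_on (p - 1) {tm i<..<tm (Suc i)} u)"

definition in_Bhp :: "real \<Rightarrow> nat \<Rightarrow> nat \<Rightarrow> (nat \<Rightarrow> real) \<Rightarrow> real set
     \<Rightarrow> real^'ny \<Rightarrow> real^'ny \<Rightarrow> real^'nu \<Rightarrow> real^'nu
     \<Rightarrow> (real \<Rightarrow> real^'ny) \<Rightarrow> (real \<Rightarrow> real^'nu) \<Rightarrow> bool" where
  "in_Bhp T p N tm S yL yR uL uR y u \<longleftrightarrow> in_Xhp T p N tm y u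
     \<and> (\<forall>t\<in>S. yL \<le> y t \<and> y t \<le> yR \<and> uL \<le> u t \<and> u t \<le> uR)"

end

theory Submission
  imports Defs
begin

text \<open>The X-norm dominates the essential supremum of the pointwise error, so
  (ys - yh, us - uh)(t) = O(h^eta) for almost every t. Since ys is an indefinite integral
  and yh is continuous, the a.e. bound on ys - yh holds at every point, in particular at
  t = 0 and t = T. Once h is so small that these errors are below eps, the Hoelder estimates
  (A.3) turn O(h^eta) into O(h^(lam*eta)); for b one uses that b (ys 0) (ys T) = 0.\<close>

lemma AE_le_imp_le_continuous_on:
  fixes f :: "real \<Rightarrow> real"
  assumes "a < b" and cont: "continuous_on {a..b} f"
    and ae: "AE t in lebesgue_on {a..b}. f t \<le> c" and t0: "t0 \<in> {a..b}"
  shows "f t0 \<le> c"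
proof (rule ccontr)
  assume "\<not> f t0 \<le> c"
  then obtain d where "d > 0" and
    near: "\<And>t. t \<in> {a..b} \<Longrightarrow> dist t t0 < d \<Longrightarrow> dist (f t) (f t0) < f t0 - c"
    using cont t0 unfolding continuous_on_iff by (metis diff_gt_0_iff_gt not_le)
  define l r where "l = max a (t0 - d/2)" and "r = min b (t0 + d/2)"
  have "l < r" and lr_sub: "{l..r} \<subseteq> {a..b}"
    using t0 \<open>a < b\<close> \<open>d > 0\<close> unfolding l_def r_def by auto
  have above: "c < f t" if "t \<in> {l..r}" for t
  proof -
    have "dist t t0 < d"
      using that \<open>d > 0\<close> unfolding l_def r_def dist_real_def by auto
    then have "dist (f t) (f t0) < f t0 - c"
      using near that lr_sub by blast
    then show ?thesis
      unfolding dist_real_def by linarith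
  qed
  have "AE t in lebesgue_on {a..b}. t \<notin> {l..r}"
    using ae by eventually_elim (use above in force)
  moreover have "{l..r} \<in> sets (lebesgue_on {a..b})"
    using lr_sub by (simp add: sets_restrict_space_iff)
  moreover have "{t \<in> space (lebesgue_on {a..b}). \<not> t \<notin> {l..r}} = {l..r}"
    using lr_sub by auto
  ultimately have "emeasure (lebesgue_on {a..b}) {l..r} = 0"
    using AE_iff_measurable[of "{l..r}" "lebesgue_on {a..b}" "\<lambda>t. t \<notin> {l..r}"] by simp
  moreover have "emeasure (lebesgue_on {a..b}) {l..r} = ennreal (r - l)"
    using lr_sub \<open>l < r\<close> by (simp add: emeasure_restrict_space)
  ultimately show False
    using \<open>l < r\<close> by simp
qed

lemma L2_deriv_continuous_on:
  assumes "L2_deriv T y g"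
  shows "continuous_on {0..T} y"
proof -
  have "continuous_on {0..T} (\<lambda>t. y 0 + integral {0..t} g)"
    using assms unfolding L2_deriv_def by (intro continuous_intros indefinite_integral_continuous_1) auto
  then show ?thesis
    using assms unfolding L2_deriv_def by (metis (no_types, lifting) continuous_on_cong)
qed

lemma ess_sup_inf_le_X_norm: "ess_sup_inf T y u \<le> X_norm T y u"
proof -
  have "0 \<le> integral {0..T} (\<lambda>t. (norm ((SOME g. L2_deriv T y g) t))\<^sup>2)"
    (is "0 \<le> integral _ ?F")
    by (cases "?F integrable_on {0..T}") (auto intro: integral_nonneg simp: not_integrable_integral)
  then show ?thesis
    unfolding X_norm_def by (simp add: ereal_le_add_self2)
qed

lemma AE_norm_le_of_X_norm_le:
  fixes y :: "real \<Rightarrow> real^'ny" and u :: "real \<Rightarrow> real^'nu"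
  assumes "X_norm T y u \<le> ereal \<delta>"
  shows "AE t in lebesgue_on {0..T}. norm (y t, u t) \<le> sqrt DIM((real^'ny) \<times> (real^'nu)) * \<delta>"
  using esssup_AE[of "\<lambda>t. ereal (infnorm (y t, u t))" "lebesgue_on {0..T}"]
proof eventually_elim
  case (elim t)
  have "ereal (infnorm (y t, u t)) \<le> ereal \<delta>"
    using elim ess_sup_inf_le_X_norm[of T y u] assms unfolding ess_sup_inf_def
    by (meson order_trans)
  then have "infnorm (y t, u t) \<le> \<delta>"
    by simp
  have "norm (y t, u t) \<le> sqrt DIM((real^'ny) \<times> (real^'nu)) * infnorm (y t, u t)"
    by (rule norm_le_infnorm)
  also have "\<dots> \<le> sqrt DIM((real^'ny) \<times> (real^'nu)) * \<delta>"
    using \<open>infnorm (y t, u t) \<le> \<delta>\<close> by (intro mult_left_mono) auto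
  finally show ?case .
qed

lemma pointwise_error_le_X_norm:
  fixes y :: "real \<Rightarrow> real^'ny" and u :: "real \<Rightarrow> real^'nu"
  defines "K \<equiv> 2 * sqrt DIM((real^'ny) \<times> (real^'nu))"
  assumes "T > 0" "0 \<le> \<delta>" and cont: "continuous_on {0..T} y" and X: "X_norm T y u \<le> ereal \<delta>"
  shows "norm (y 0, y T) \<le> K * \<delta>"
    and "AE t in lebesgue_on {0..T}. norm (y t, u t) \<le> K * \<delta>"
proof -
  let ?D = "sqrt DIM((real^'ny) \<times> (real^'nu))"
  have ae: "AE t in lebesgue_on {0..T}. norm (y t, u t) \<le> ?D * \<delta>"
    using AE_norm_le_of_X_norm_le[OF X] .
  then have "AE t in lebesgue_on {0..T}. norm (y t) \<le> ?D * \<delta>"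
    by eventually_elim (meson norm_fst_le order_trans)
  then have "norm (y t) \<le> ?D * \<delta>" if "t \<in> {0..T}" for t
    using AE_le_imp_le_continuous_on[of 0 T "\<lambda>t. norm (y t)"] cont that \<open>T > 0\<close>
    by (auto intro: continuous_intros)
  then have "norm (y 0) \<le> ?D * \<delta>" "norm (y T) \<le> ?D * \<delta>"
    using \<open>T > 0\<close> by auto
  then show "norm (y 0, y T) \<le> K * \<delta>"
    using norm_Pair_le[of "y 0" "y T"] unfolding K_def by linarith
  have "?D * \<delta> \<le> K * \<delta>"
    using \<open>0 \<le> \<delta>\<close> unfolding K_def by (simp add: mult_right_mono)
  then show "AE t in lebesgue_on {0..T}. norm (y t, u t) \<le> K * \<delta>"
    using ae by (auto elim: eventually_mono)
qed

lemma holder_rate: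
  fixes d e :: real
  assumes "0 < lam" "0 \<le> Clam" "0 < E" "0 < h" "0 \<le> d"
    and "d \<le> E * h powr eta" and "e \<le> Clam * d powr lam"
  shows "e \<le> Clam * E powr lam * h powr (lam * eta)"
proof -
  have "d powr lam \<le> (E * h powr eta) powr lam"
    using assms by (intro powr_mono2) auto
  also have "\<dots> = E powr lam * h powr (lam * eta)"
    using assms by (simp add: powr_mult powr_powr mult.commute)
  finally have "Clam * d powr lam \<le> Clam * (E powr lam * h powr (lam * eta))"
    using assms by (intro mult_left_mono) auto
  then show ?thesis
    using assms by (simp add: mult.assoc)
qed

lemma power2_le_powr_double:
  fixes x :: real
  assumes "0 \<le> x" "x \<le> C * h powr a"
  shows "x\<^sup>2 \<le> C\<^sup>2 * h powr (2 * a)"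
proof -
  have "x\<^sup>2 \<le> (C * h powr a)\<^sup>2"
    using assms by (intro power_mono) auto
  also have "\<dots> = C\<^sup>2 * (h powr a)\<^sup>2"
    by (rule power_mult_distrib)
  also have "(h powr a)\<^sup>2 = h powr (2 * a)"
    by (simp only: power2_eq_square mult_2 powr_add)
  finally show ?thesis .
qed

lemma mult_powr_le_if_le_powr_inverse:
  fixes h :: real
  assumes "0 < E" "0 < eta" "0 \<le> eps" "0 \<le> h" "h \<le> (eps / E) powr (1 / eta)"
  shows "E * h powr eta \<le> eps"
proof -
  have "h powr eta \<le> ((eps / E) powr (1 / eta)) powr eta"
    using assms by (intro powr_mono2) auto
  also have "\<dots> \<le> eps / E"
    using assms by (simp add: powr_powr)
  finally show ?thesis
    using assms by (simp add: field_simps)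
qed

theorem mainTheorem13:
  fixes T :: real and p :: nat
    and M :: "real^'ny \<Rightarrow> real^'ny \<Rightarrow> real"
    and b :: "real^'ny \<Rightarrow> real^'ny \<Rightarrow> real^'nb"
    and f1 :: "real^'ny \<Rightarrow> real^'nu \<Rightarrow> real \<Rightarrow> real^'ny"
    and f2 :: "real^'ny \<Rightarrow> real^'nu \<Rightarrow> real \<Rightarrow> real^'nc"
    and yL yR :: "real^'ny" and uL uR :: "real^'nu"
    and ys :: "real \<Rightarrow> real^'ny" and us :: "real \<Rightarrow> real^'nu"
    and Nm :: "real \<Rightarrow> nat" and tm :: "real \<Rightarrow> nat \<Rightarrow> real" and S :: "real \<Rightarrow> real set"
    and yh :: "real \<Rightarrow> real \<Rightarrow> real^'ny" and uh :: "real \<Rightarrow> real \<Rightarrow> real^'nu"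
    and h0 eta Ceta lam Clam eps :: real
  assumes T: "T > 0" and p: "p \<ge> 1"
    and bounds: "yL \<le> yR" "uL \<le> uR"
    and locmin: "local_minimizer T M b f1 f2 yL yR uL uR ys us"
    \<comment> \<open>Approximability, with a family of meshes and sampling points indexed by h\<close>
    and approx_const: "h0 > 0" "eta > 0" "Ceta > 0"
    and mesh: "\<And>h. 0 < h \<Longrightarrow> h \<le> h0 \<Longrightarrow> is_mesh T h (Nm h) (tm h) \<and> S h \<subseteq> {0..T}"
    and approx_B: "\<And>h. 0 < h \<Longrightarrow> h \<le> h0 \<Longrightarrow>
        in_Bhp T p (Nm h) (tm h) (S h) yL yR uL uR (yh h) (uh h)"
    and approx_err: "\<And>h. 0 < h \<Longrightarrow> h \<le> h0 \<Longrightarrow>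
        X_norm T (\<lambda>t. ys t - yh h t) (\<lambda>t. us t - uh h t) \<le> ereal (Ceta * h powr eta)"
    \<comment> \<open>(A.3)\<close>
    and A3_const: "0 < lam" "lam \<le> 1" "Clam > 0" "eps > 0"
    and A3_M: "\<And>a a'. norm (ys 0 - a, ys T - a') \<le> eps \<Longrightarrow>
        \<bar>M (ys 0) (ys T) - M a a'\<bar> \<le> Clam * norm (ys 0 - a, ys T - a') powr lam"
    and A3_b: "\<And>a a'. norm (ys 0 - a, ys T - a') \<le> eps \<Longrightarrow>
        norm (b (ys 0) (ys T) - b a a') \<le> Clam * norm (ys 0 - a, ys T - a') powr lam"
    and A3_f: "\<And>t v w. t \<in> {0..T} \<Longrightarrow> norm (ys t - v, us t - w) \<le> eps \<Longrightarrow>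
        norm (f1 (ys t) (us t) t - f1 v w t, f2 (ys t) (us t) t - f2 v w t)
          \<le> Clam * norm (ys t - v, us t - w) powr lam"
  shows "\<exists>CM Cb Cf h1. CM > 0 \<and> Cb > 0 \<and> Cf > 0 \<and> h1 > 0 \<and>
     (\<forall>h. 0 < h \<and> h \<le> h1 \<longrightarrow>
        \<bar>M (ys 0) (ys T) - M (yh h 0) (yh h T)\<bar> \<le> CM * h powr (lam * eta)
      \<and> norm (b (yh h 0) (yh h T)) ^ 2 \<le> Cb * h powr (2 * lam * eta)
      \<and> (AE t in lebesgue_on {0..T}.
           norm (f1 (ys t) (us t) t - f1 (yh h t) (uh h t) t,
                 f2 (ys t) (us t) t - f2 (yh h t) (uh h t) t) ^ 2
           \<le> Cf * h powr (2 * lam * eta)))"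
proof -
  obtain g where "L2_deriv T ys g" and b_opt: "b (ys 0) (ys T) = 0"
    using locmin unfolding local_minimizer_def feasible_def in_X_def by blast
  define K :: real where "K = 2 * sqrt DIM((real^'ny) \<times> (real^'nu))"
  define E where "E = K * Ceta"
  define C where "C = Clam * E powr lam"
  define h1 where "h1 = min h0 ((eps / E) powr (1 / eta))"
  have "E > 0"
    using approx_const unfolding E_def K_def by (simp add: add_pos_pos)
  then have "C > 0" and "h1 > 0"
    using approx_const A3_const by (simp_all add: C_def h1_def)
  have err: "norm (ys 0 - yh h 0, ys T - yh h T) \<le> E * h powr eta"
    "AE t in lebesgue_on {0..T}. norm (ys t - yh h t, us t - uh h t) \<le> E * h powr eta"
    if "0 < h" "h \<le> h0" for h
  proof -
    have "continuous_on {0..T} (\<lambda>t. ys t - yh h t)"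
      using L2_deriv_continuous_on[OF \<open>L2_deriv T ys g\<close>] approx_B[OF that]
      unfolding in_Bhp_def in_Xhp_def by (auto intro: continuous_intros)
    from pointwise_error_le_X_norm[OF T _ this approx_err[OF that]]
    show "norm (ys 0 - yh h 0, ys T - yh h T) \<le> E * h powr eta"
      "AE t in lebesgue_on {0..T}. norm (ys t - yh h t, us t - uh h t) \<le> E * h powr eta"
      using approx_const by (simp_all add: E_def K_def mult.assoc)
  qed
  have rate: "e \<le> C * h powr (lam * eta)"
    if "0 < h" "h \<le> h1" "d \<le> E * h powr eta" "e \<le> Clam * d powr lam" "0 \<le> d" for d e h
    using holder_rate[OF _ _ \<open>E > 0\<close>] that A3_const unfolding C_def by simp
  have small: "E * h powr eta \<le> eps" if "0 < h" "h \<le> h1" for h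
    using mult_powr_le_if_le_powr_inverse[OF \<open>E > 0\<close>] that approx_const A3_const
    unfolding h1_def by simp
  show ?thesis
  proof (intro exI conjI allI impI)
    fix h assume h: "0 < h \<and> h \<le> h1"
    then have "h \<le> h0"
      unfolding h1_def by simp
    note err = err[OF conjunct1[OF h] this] and small = small[OF conjunct1[OF h] conjunct2[OF h]]
    have "norm (ys 0 - yh h 0, ys T - yh h T) \<le> eps"
      using err small by linarith
    from A3_M[OF this] A3_b[OF this]
    show "\<bar>M (ys 0) (ys T) - M (yh h 0) (yh h T)\<bar> \<le> C * h powr (lam * eta)"
      and "norm (b (yh h 0) (yh h T)) ^ 2 \<le> C\<^sup>2 * h powr (2 * lam * eta)"
      using rate err h b_opt power2_le_powr_double by (auto simp: mult.assoc)
    show "AE t in lebesgue_on {0..T}.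
           norm (f1 (ys t) (us t) t - f1 (yh h t) (uh h t) t,
                 f2 (ys t) (us t) t - f2 (yh h t) (uh h t) t) ^ 2
           \<le> C\<^sup>2 * h powr (2 * lam * eta)"
      using err(2) AE_space
    proof eventually_elim
      case (elim t)
      then have "norm (ys t - yh h t, us t - uh h t) \<le> eps"
        using small by linarith
      from A3_f[OF _ this] show ?case
        using elim rate h power2_le_powr_double by (auto simp: mult.assoc)
    qed
  qed (use \<open>C > 0\<close> \<open>h1 > 0\<close> in auto)
qed

end
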